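(* Let $n\ge1$, let $w_{ij}$ ($i=1,2$, $j=1,\dots,n$) be nonzero integers and $\varepsilon_1,\varepsilon_2\in\{1,-1\}$, and suppose that for all complex numbers $x,y$ the rational function $$T^W_{x,y}(z)=\sum_{i=1}^2\varepsilon_i\prod_{j=1}^n\frac{xz^{w_{ij}}+y}{z^{w_{ij}}-1}$$ does not depend on $z$. Then, up to permuting the entries within each row and interchanging the two rows, exactly one of the following holds: (Z) $w_{1j}=w_{2j}$ for all $j=1,\dots,n$, and $\varepsilon_1=-\varepsilon_2$; (L$_1$) $n=1$, $w_{11}=a$, $w_{21}=-a$ for some positive integer $a$, and $\varepsilon_1=\varepsilon_2$; (S$_3$) $n=3$, $(w_{11},w_{12},w_{13})=(a,b,-(a+b))=-(w_{21},w_{22},w_{23})$ for some positive integers $a,b$, and $\varepsilon_1=\varepsilon_2$. *)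

theory Defs
  imports Complex_Main "HOL-Combinatorics.Permutations"
begin

definition T_W :: "nat \<Rightarrow> (nat \<Rightarrow> nat \<Rightarrow> int) \<Rightarrow> (nat \<Rightarrow> int) \<Rightarrow> complex \<Rightarrow> complex \<Rightarrow> complex \<Rightarrow> complex" where
  "T_W n w eps x y z =
     (\<Sum>i\<in>{1,2::nat}. of_int (eps i) *
        (\<Prod>j\<in>{1..n}. (x * z powi w i j + y) / (z powi w i j - 1)))"

text \<open>T_W (as a rational function in z) does not depend on z: it is constant
  on its domain, i.e. on all z with z \<noteq> 0 and z^(w i j) \<noteq> 1 for all i, j.\<close>
definition T_const :: "nat \<Rightarrow> (nat \<Rightarrow> nat \<Rightarrow> int) \<Rightarrow> (nat \<Rightarrow> int) \<Rightarrow> complex \<Rightarrow> complex \<Rightarrow> bool" where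
  "T_const n w eps x y \<longleftrightarrow>
     (\<exists>c. \<forall>z. z \<noteq> 0 \<and> (\<forall>i\<in>{1,2}. \<forall>j\<in>{1..n}. z powi w i j \<noteq> 1) \<longrightarrow> T_W n w eps x y z = c)"

definition rearr :: "nat \<Rightarrow> (nat \<Rightarrow> nat \<Rightarrow> int) \<Rightarrow> (nat \<Rightarrow> int) \<Rightarrow> (nat \<Rightarrow> nat \<Rightarrow> int) \<Rightarrow> (nat \<Rightarrow> int) \<Rightarrow> bool" where
  "rearr n w eps w' eps' \<longleftrightarrow>
     (\<exists>\<tau> \<sigma>. \<tau> permutes {1,2::nat} \<and> (\<forall>i\<in>{1,2}. \<sigma> i permutes {1..n}) \<and>
        (\<forall>i\<in>{1,2}. \<forall>j\<in>{1..n}. w' i j = w (\<tau> i) (\<sigma> (\<tau> i) j)) \<and>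
        (\<forall>i\<in>{1,2}. eps' i = eps (\<tau> i)))"

definition case_Z :: "nat \<Rightarrow> (nat \<Rightarrow> nat \<Rightarrow> int) \<Rightarrow> (nat \<Rightarrow> int) \<Rightarrow> bool" where
  "case_Z n w eps \<longleftrightarrow> (\<exists>w' eps'. rearr n w eps w' eps' \<and>
     (\<forall>j\<in>{1..n}. w' 1 j = w' 2 j) \<and> eps' 1 = - eps' 2)"

definition case_L1 :: "nat \<Rightarrow> (nat \<Rightarrow> nat \<Rightarrow> int) \<Rightarrow> (nat \<Rightarrow> int) \<Rightarrow> bool" where
  "case_L1 n w eps \<longleftrightarrow> n = 1 \<and> (\<exists>w' eps'. rearr n w eps w' eps' \<and>
     (\<exists>a::int. a > 0 \<and> w' 1 1 = a \<and> w' 2 1 = - a) \<and> eps' 1 = eps' 2)"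

definition case_S3 :: "nat \<Rightarrow> (nat \<Rightarrow> nat \<Rightarrow> int) \<Rightarrow> (nat \<Rightarrow> int) \<Rightarrow> bool" where
  "case_S3 n w eps \<longleftrightarrow> n = 3 \<and> (\<exists>w' eps'. rearr n w eps w' eps' \<and>
     (\<exists>a b::int. a > 0 \<and> b > 0 \<and>
        w' 1 1 = a \<and> w' 1 2 = b \<and> w' 1 3 = - (a + b) \<and>
        w' 2 1 = - a \<and> w' 2 2 = - b \<and> w' 2 3 = a + b) \<and> eps' 1 = eps' 2)"

end

theory Submission
  imports Defs "HOL-Computational_Algebra.Polynomial" "HOL-Library.Real_Mod"
begin

(*
  Putting x = 1, y = -r turns T into eps_1 R_1(z,r) + eps_2 R_2(z,r) with
  R_i(z,r) = prod_j (z^w_ij - r) / (z^w_ij - 1), for fixed z a polynomial of degree n in r.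
  Letting z tend to infinity and to 0 along the reals shows that its constant value is
  eps_1 r^q_1 + eps_2 r^q_2 = eps_1 r^(n-q_1) + eps_2 r^(n-q_2), q_i the number of negative
  weights in row i. Comparing the coefficients of r^n and r^(n-1) then expresses the power sums
  sum_j z^w_ij through the denominators prod_j (z^w_ij - 1), and an identity between Laurent
  polynomials in z determines the multiset of exponents.
  Opposite signs give q_1 = q_2 and equal power sums, hence equal rows. Equal signs give
  q_1 + q_2 = n and disjoint rows; evaluating at a root of unity of order 2 |w_0 (q_1 - q_2)|,
  w_0 a weight of maximal modulus, shows |q_1 - q_2| = 1 and that -w_0 occurs in the other row.
  Only n = 1 and n = 3 survive, and for n = 3 the coefficient identity pins the rows down.
*)

definition rat_prod :: "nat \<Rightarrow> (nat \<Rightarrow> int) \<Rightarrow> complex \<Rightarrow> complex \<Rightarrow> complex" where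
  "rat_prod n u z r = (\<Prod>j\<in>{1..n}. (z powi u j - r) / (z powi u j - 1))"

definition pole_prod :: "nat \<Rightarrow> (nat \<Rightarrow> int) \<Rightarrow> complex \<Rightarrow> complex" where
  "pole_prod n u z = (\<Prod>j\<in>{1..n}. z powi u j - 1)"

definition power_sum :: "nat \<Rightarrow> (nat \<Rightarrow> int) \<Rightarrow> complex \<Rightarrow> complex" where
  "power_sum n u z = (\<Sum>j\<in>{1..n}. z powi u j)"

definition neg_count :: "nat \<Rightarrow> (nat \<Rightarrow> int) \<Rightarrow> nat" where
  "neg_count n u = card {j\<in>{1..n}. u j < 0}"

definition regular :: "nat \<Rightarrow> (nat \<Rightarrow> int) \<Rightarrow> complex \<Rightarrow> bool" where
  "regular n u z \<longleftrightarrow> z \<noteq> 0 \<and> (\<forall>j\<in>{1..n}. z powi u j \<noteq> 1)"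

lemma T_W_one_minus:
  "T_W n w eps 1 (- r) z = of_int (eps 1) * rat_prod n (w 1) z r + of_int (eps 2) * rat_prod n (w 2) z r"
  by (simp add: T_W_def rat_prod_def)

lemma regular_uminus_iff: "regular n (\<lambda>j. - u j) z \<longleftrightarrow> regular n u (inverse z)"
  unfolding regular_def by (auto simp: power_int_minus power_int_inverse)

lemma pole_prod_nonzero: "regular n u z \<Longrightarrow> pole_prod n u z \<noteq> 0"
  unfolding regular_def pole_prod_def by auto

lemma regular_of_real:
  assumes "x > 1" and "\<forall>j\<in>{1..n}. u j \<noteq> 0"
  shows "regular n u (of_real x)"
proof -
  have "x powi k \<noteq> 1" if "k \<noteq> 0" for k
    using power_int_strict_increasing[of 0 k x] power_int_strict_increasing[of k 0 x] \<open>x > 1\<close> that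
    by (cases "k > 0") auto
  then have "(of_real x :: complex) powi k \<noteq> 1" if "k \<noteq> 0" for k
    using that by (metis of_real_eq_1_iff of_real_power_int)
  then show ?thesis
    using assms unfolding regular_def by auto
qed

lemma rat_prod_inverse: "rat_prod n u (inverse z) r = rat_prod n (\<lambda>j. - u j) z r"
  unfolding rat_prod_def by (simp add: power_int_minus power_int_inverse)

lemma neg_count_le: "neg_count n u \<le> n"
proof -
  have "card {j\<in>{1..n}. u j < 0} \<le> card {1..n}"
    by (rule card_mono) auto
  then show ?thesis
    by (simp add: neg_count_def)
qed

lemma neg_count_uminus:
  assumes "\<forall>j\<in>{1..n}. u j \<noteq> 0"
  shows "neg_count n (\<lambda>j. - u j) = n - neg_count n u"
proof -
  have "{j\<in>{1..n}. - u j < 0} = {1..n} - {j\<in>{1..n}. u j < 0}"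
    using assms by force
  moreover have "card ({1..n} - {j\<in>{1..n}. u j < 0}) = n - card {j\<in>{1..n}. u j < 0}"
    by (subst card_Diff_subset) auto
  ultimately show ?thesis
    unfolding neg_count_def by simp
qed

lemma tendsto_of_real_powi_neg_at_top:
  assumes "k > 0"
  shows "((\<lambda>x::real. (of_real x :: complex) powi (- k)) \<longlongrightarrow> 0) at_top"
proof -
  have "((\<lambda>x::real. inverse (x ^ nat k)) \<longlongrightarrow> 0) at_top"
    using assms by (intro tendsto_inverse_0_at_top filterlim_pow_at_top filterlim_ident) auto
  then have "((\<lambda>x. of_real (inverse (x ^ nat k)) :: complex) \<longlongrightarrow> of_real 0) at_top"
    by (rule tendsto_of_real)
  then show ?thesis
    using assms by (simp add: power_int_minus power_int_def power_inverse)
qed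

lemma tendsto_rat_factor_at_top:
  assumes "k \<noteq> 0"
  shows "((\<lambda>x::real. ((of_real x :: complex) powi k - r) / (of_real x powi k - 1))
           \<longlongrightarrow> (if k < 0 then r else 1)) at_top"
proof -
  define s where "s x = (of_real x :: complex) powi (- \<bar>k\<bar>)" for x
  have s: "(s \<longlongrightarrow> 0) at_top"
    unfolding s_def using assms by (intro tendsto_of_real_powi_neg_at_top) simp
  show ?thesis
  proof (cases "k < 0")
    case True
    then have "(of_real x :: complex) powi k = s x" for x
      by (simp add: s_def)
    moreover have "((\<lambda>x. (s x - r) / (s x - 1)) \<longlongrightarrow> (0 - r) / (0 - 1)) at_top"
      by (intro tendsto_intros s) simp
    ultimately show ?thesis
      using True by simp
  next
    case False
    have "(1 - r * s x) / (1 - s x) = ((of_real x :: complex) powi k - r) / (of_real x powi k - 1)"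
      if "x > 0" for x
    proof -
      have "s x = inverse ((of_real x :: complex) powi k)"
        using False assms by (simp add: s_def power_int_minus)
      moreover have "(1 - r * inverse t) / (1 - inverse t) = (t - r) / (t - 1)" if "t \<noteq> 0" for t :: complex
        using that by (simp add: divide_simps)
      ultimately show ?thesis
        using that by simp
    qed
    then have "eventually (\<lambda>x. (1 - r * s x) / (1 - s x)
            = ((of_real x :: complex) powi k - r) / (of_real x powi k - 1)) at_top"
      using eventually_gt_at_top[of 0] by (rule eventually_mono[rotated])
    moreover have "((\<lambda>x. (1 - r * s x) / (1 - s x)) \<longlongrightarrow> (1 - r * 0) / (1 - 0)) at_top"
      by (intro tendsto_intros s) simp
    ultimately show ?thesis
      using False tendsto_cong by fastforce
  qed
qed

lemma tendsto_rat_prod_at_top: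
  assumes "\<forall>j\<in>{1..n}. u j \<noteq> 0"
  shows "((\<lambda>x::real. rat_prod n u (of_real x) r) \<longlongrightarrow> r ^ neg_count n u) at_top"
proof -
  have "((\<lambda>x::real. rat_prod n u (of_real x) r) \<longlongrightarrow> (\<Prod>j\<in>{1..n}. if u j < 0 then r else 1)) at_top"
    unfolding rat_prod_def using assms by (intro tendsto_prod tendsto_rat_factor_at_top) auto
  moreover have "(\<Prod>j\<in>{1..n}. if u j < 0 then r else 1) = r ^ neg_count n u"
    unfolding neg_count_def by (simp add: prod.inter_filter[symmetric])
  ultimately show ?thesis
    by simp
qed

lemma rat_prod_combination_value:
  fixes a b c :: complex
  assumes nz: "\<forall>j\<in>{1..n}. u j \<noteq> 0 \<and> v j \<noteq> 0"
    and const: "\<forall>z. regular n u z \<and> regular n v z \<longrightarrow> a * rat_prod n u z r + b * rat_prod n v z r = c"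
  shows "c = a * r ^ neg_count n u + b * r ^ neg_count n v"
proof -
  have "eventually (\<lambda>x. a * rat_prod n u (of_real x) r + b * rat_prod n v (of_real x) r = c) at_top"
    using eventually_gt_at_top[of 1] by eventually_elim (use const nz regular_of_real in auto)
  moreover have "((\<lambda>x. a * rat_prod n u (of_real x) r + b * rat_prod n v (of_real x) r)
      \<longlongrightarrow> a * r ^ neg_count n u + b * r ^ neg_count n v) at_top"
    using nz by (intro tendsto_intros tendsto_rat_prod_at_top) auto
  ultimately show ?thesis
    using tendsto_cong by (fastforce simp: tendsto_const_iff)
qed

lemma rat_prod_combination_value_reflected:
  fixes a b c :: complex
  assumes nz: "\<forall>j\<in>{1..n}. u j \<noteq> 0 \<and> v j \<noteq> 0"
    and const: "\<forall>z. regular n u z \<and> regular n v z \<longrightarrow> a * rat_prod n u z r + b * rat_prod n v z r = c"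
  shows "c = a * r ^ (n - neg_count n u) + b * r ^ (n - neg_count n v)"
proof -
  have "\<forall>z. regular n (\<lambda>j. - u j) z \<and> regular n (\<lambda>j. - v j) z \<longrightarrow>
      a * rat_prod n (\<lambda>j. - u j) z r + b * rat_prod n (\<lambda>j. - v j) z r = c"
    using const by (simp add: regular_uminus_iff flip: rat_prod_inverse)
  from rat_prod_combination_value[OF _ this] show ?thesis
    using nz by (simp add: neg_count_uminus)
qed

lemma T_const_rat_prod_identity:
  assumes nz: "\<forall>i\<in>{1,2}. \<forall>j\<in>{1..n}. w i j \<noteq> 0" and const: "T_const n w eps 1 (- r)"
  shows "\<forall>z. regular n (w 1) z \<and> regular n (w 2) z \<longrightarrow>
           of_int (eps 1) * rat_prod n (w 1) z r + of_int (eps 2) * rat_prod n (w 2) z r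
           = of_int (eps 1) * r ^ neg_count n (w 1) + of_int (eps 2) * r ^ neg_count n (w 2)"
    and "of_int (eps 1) * r ^ neg_count n (w 1) + of_int (eps 2) * r ^ neg_count n (w 2)
           = of_int (eps 1) * r ^ (n - neg_count n (w 1)) + of_int (eps 2) * r ^ (n - neg_count n (w 2))"
proof -
  obtain c where "\<forall>z. z \<noteq> 0 \<and> (\<forall>i\<in>{1,2}. \<forall>j\<in>{1..n}. z powi w i j \<noteq> 1) \<longrightarrow> T_W n w eps 1 (- r) z = c"
    using const unfolding T_const_def by blast
  then have c: "\<forall>z. regular n (w 1) z \<and> regular n (w 2) z \<longrightarrow>
      of_int (eps 1) * rat_prod n (w 1) z r + of_int (eps 2) * rat_prod n (w 2) z r = c"
    by (auto simp: regular_def T_W_one_minus)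
  have nz': "\<forall>j\<in>{1..n}. w 1 j \<noteq> 0 \<and> w 2 j \<noteq> 0"
    using nz by simp
  show "\<forall>z. regular n (w 1) z \<and> regular n (w 2) z \<longrightarrow>
           of_int (eps 1) * rat_prod n (w 1) z r + of_int (eps 2) * rat_prod n (w 2) z r
           = of_int (eps 1) * r ^ neg_count n (w 1) + of_int (eps 2) * r ^ neg_count n (w 2)"
    using c rat_prod_combination_value[OF nz' c] by simp
  show "of_int (eps 1) * r ^ neg_count n (w 1) + of_int (eps 2) * r ^ neg_count n (w 2)
           = of_int (eps 1) * r ^ (n - neg_count n (w 1)) + of_int (eps 2) * r ^ (n - neg_count n (w 2))"
    using rat_prod_combination_value[OF nz' c] rat_prod_combination_value_reflected[OF nz' c] by simp
qed

lemma poly_shifted_monoms: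
  fixes M :: "int multiset" and x :: complex
  assumes "\<forall>e\<in>#M. e + int N \<ge> 0" and "x \<noteq> 0"
  shows "poly (\<Sum>e\<in>#M. monom 1 (nat (e + int N))) x = x ^ N * (\<Sum>e\<in>#M. x powi e)"
  using assms(1)
proof (induction M)
  case (add e M)
  have "x ^ nat (e + int N) = x ^ N * x powi e"
    using add.prems assms(2) by (simp flip: power_int_of_nat add: power_int_add)
  then show ?case
    using add by (simp add: poly_monom algebra_simps)
qed simp

lemma coeff_shifted_monoms:
  fixes M :: "int multiset"
  assumes "\<forall>e\<in>#M. e + int N \<ge> 0"
  shows "coeff (\<Sum>e\<in>#M. monom (1::complex) (nat (e + int N))) k = of_nat (count M (int k - int N))"
  using assms
proof (induction M)
  case (add e M)
  have "nat (e + int N) = k \<longleftrightarrow> int k - int N = e"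
    using add.prems by auto
  then show ?case
    using add by (auto simp: coeff_monom)
qed simp

lemma poly_eq_0_if_roots_above_1:
  fixes p :: "complex poly"
  assumes "\<forall>x::real. x > 1 \<longrightarrow> poly p (of_real x) = 0"
  shows "p = 0"
proof (rule ccontr)
  assume "p \<noteq> 0"
  then have "finite {z. poly p z = 0}"
    by (rule poly_roots_finite)
  moreover have "of_real ` {1<..} \<subseteq> {z. poly p z = 0}"
    using assms by auto
  ultimately have "finite ((of_real :: real \<Rightarrow> complex) ` {1<..})"
    by (rule finite_subset[rotated])
  then have "finite {1::real<..}"
    using finite_imageD inj_of_real inj_on_subset by blast
  then show False
    using infinite_Ioi by blast
qed

(* Multiplying by x^N turns both Laurent sums into polynomials whose coefficients count exponents. *)
lemma mset_eq_if_powi_sums_eq: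
  fixes E F :: "int multiset"
  assumes sums: "\<forall>x::real. x > 1 \<longrightarrow> (\<Sum>e\<in>#E. (of_real x :: complex) powi e) = (\<Sum>e\<in>#F. of_real x powi e)"
  shows "E = F"
proof -
  define N where "N = (\<Sum>e\<in>#E + F. nat \<bar>e\<bar>)"
  have N: "e + int N \<ge> 0" if e: "e \<in># E + F" for e
  proof -
    obtain M where "E + F = add_mset e M"
      using e by (blast dest: multi_member_split)
    then have "nat \<bar>e\<bar> \<le> N"
      by (simp add: N_def)
    then show ?thesis
      by linarith
  qed
  define P where "P M = (\<Sum>e\<in>#M. monom (1::complex) (nat (e + int N)))" for M
  have EN: "\<forall>e\<in>#E. e + int N \<ge> 0" and FN: "\<forall>e\<in>#F. e + int N \<ge> 0"
    using N by auto
  have "poly (P E - P F) (of_real x) = 0" if "x > 1" for x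
  proof -
    have "(of_real x :: complex) \<noteq> 0"
      using that by simp
    then show ?thesis
      using that sums poly_shifted_monoms[OF EN] poly_shifted_monoms[OF FN] by (simp add: P_def)
  qed
  then have "P E - P F = 0"
    by (intro poly_eq_0_if_roots_above_1) auto
  then have "P E = P F"
    by simp
  then have "of_nat (count E e) = (of_nat (count F e) :: complex)" if "e + int N \<ge> 0" for e
    using that coeff_shifted_monoms[OF EN, of "nat (e + int N)"] coeff_shifted_monoms[OF FN, of "nat (e + int N)"]
    by (simp add: P_def)
  moreover have "count E e = 0 \<and> count F e = 0" if "e + int N < 0" for e
    using EN FN that by (auto simp: count_eq_zero_iff)
  ultimately have "count E e = count F e" for e
    by (metis linorder_not_le of_nat_eq_iff)
  then show ?thesis
    by (rule multiset_eqI)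
qed

lemma mset_eq_if_power_sums_eq:
  fixes E F :: "nat multiset"
  assumes "\<forall>r::complex. (\<Sum>e\<in>#E. r ^ e) = (\<Sum>e\<in>#F. r ^ e)"
  shows "E = F"
proof -
  have "image_mset int E = image_mset int F"
    by (rule mset_eq_if_powi_sums_eq) (use assms in \<open>simp add: multiset.map_comp comp_def\<close>)
  then show ?thesis
    by (rule multiset.inj_map_strong[rotated]) simp
qed

lemma power_diff_reflection_imp_eq:
  assumes "\<forall>r::complex. r ^ p - r ^ q = r ^ (n - p) - r ^ (n - q)" and "p \<le> n" "q \<le> n"
  shows "p = q"
proof -
  have "{#p, n - q#} = {#n - p, q#}"
    by (rule mset_eq_if_power_sums_eq) (use assms(1) in \<open>auto simp: algebra_simps eq_diff_eq diff_eq_eq\<close>)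
  then show ?thesis
    using assms(2,3) by (auto simp: add_eq_conv_ex)
qed

lemma power_sum_reflection_imp_complementary:
  assumes "\<forall>r::complex. r ^ p + r ^ q = r ^ (n - p) + r ^ (n - q)" and "p \<le> n" "q \<le> n"
  shows "p + q = n"
proof -
  have "{#p, q#} = {#n - p, n - q#}"
    by (rule mset_eq_if_power_sums_eq) (use assms(1) in simp)
  then show ?thesis
    using assms(2,3) by (auto simp: add_eq_conv_ex)
qed

lemma degree_prod_linear: "degree (\<Prod>j\<in>J. [:c j, -1 :: 'a :: idom:]) = card J"
  by (cases "finite J") (simp_all add: degree_prod_sum_eq)

lemma coeff_prod_linear_top: "coeff (\<Prod>j\<in>J. [:c j, -1 :: 'a :: idom:]) (card J) = (-1) ^ card J"
  using lead_coeff_prod[of "\<lambda>j. [:c j, -1:]" J] by (simp add: degree_prod_linear)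

lemma coeff_prod_linear_subtop:
  fixes c :: "'b \<Rightarrow> 'a :: idom"
  assumes "finite J" and "J \<noteq> {}"
  shows "coeff (\<Prod>j\<in>J. [:c j, -1:]) (card J - 1) = (-1) ^ (card J - 1) * (\<Sum>j\<in>J. c j)"
  using assms
proof (induction J rule: finite_ne_induct)
  case (insert a J)
  define p where "p = (\<Prod>j\<in>J. [:c j, -1:])"
  obtain m where m: "card J = Suc m"
    using insert.hyps by (metis card_gt_0_iff gr0_implies_Suc)
  have "coeff (\<Prod>j\<in>insert a J. [:c j, -1:]) (card (insert a J) - 1) = c a * coeff p (Suc m) - coeff p m"
    using insert.hyps m by (simp add: p_def mult_pCons_left)
  also have "\<dots> = c a * (-1) ^ Suc m - (-1) ^ m * (\<Sum>j\<in>J. c j)"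
    using insert.IH coeff_prod_linear_top[of c J] m by (simp add: p_def)
  also have "\<dots> = (-1) ^ (card (insert a J) - 1) * (\<Sum>j\<in>insert a J. c j)"
    using insert.hyps m by (simp add: algebra_simps)
  finally show ?case .
qed simp

lemma rat_prod_poly: "rat_prod n u z r = poly (\<Prod>j\<in>{1..n}. [:z powi u j, -1:]) r / pole_prod n u z"
  unfolding rat_prod_def pole_prod_def poly_prod by (simp add: prod_dividef)

lemma rat_prod_combination_coeffs:
  fixes a b :: complex
  assumes "n \<ge> 1" and comb: "\<forall>r. a * rat_prod n u z r + b * rat_prod n v z r = a * r ^ p + b * r ^ q"
  shows "(-1) ^ n * (a / pole_prod n u z + b / pole_prod n v z)
           = (if p = n then a else 0) + (if q = n then b else 0)"
    and "(-1) ^ (n - 1) * (a * power_sum n u z / pole_prod n u z + b * power_sum n v z / pole_prod n v z)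
           = (if p = n - 1 then a else 0) + (if q = n - 1 then b else 0)"
proof -
  define P where "P u = (\<Prod>j\<in>{1..n}. [:z powi u j, -1:])" for u
  have top: "coeff (P u) n = (-1) ^ n" for u
    using coeff_prod_linear_top[of "\<lambda>j. z powi u j" "{1..n}"] by (simp add: P_def)
  have subtop: "coeff (P u) (n - 1) = (-1) ^ (n - 1) * power_sum n u z" for u
    using coeff_prod_linear_subtop[of "{1..n}" "\<lambda>j. z powi u j"] assms(1) by (simp add: P_def power_sum_def)
  define Q where "Q = smult (a / pole_prod n u z) (P u) + smult (b / pole_prod n v z) (P v) - monom a p - monom b q"
  have "poly Q = poly 0"
    using comb by (simp add: fun_eq_iff Q_def P_def poly_monom rat_prod_poly)
  then have "Q = 0"
    by (simp only: poly_eq_poly_eq_iff)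
  then have "coeff Q n = 0" and "coeff Q (n - 1) = 0"
    by simp_all
  then show "(-1) ^ n * (a / pole_prod n u z + b / pole_prod n v z)
           = (if p = n then a else 0) + (if q = n then b else 0)"
    and "(-1) ^ (n - 1) * (a * power_sum n u z / pole_prod n u z + b * power_sum n v z / pole_prod n v z)
           = (if p = n - 1 then a else 0) + (if q = n - 1 then b else 0)"
    unfolding Q_def by (simp_all add: coeff_monom top subtop algebra_simps del: One_nat_def)
qed

lemma power_sum_eq_if_rat_prod_eq:
  assumes "n \<ge> 1" and reg: "regular n u z" "regular n v z"
    and eq: "\<forall>r. rat_prod n u z r = rat_prod n v z r"
  shows "power_sum n u z = power_sum n v z"
proof -
  have comb: "\<forall>r. 1 * rat_prod n u z r + (- 1) * rat_prod n v z r = 1 * r ^ 0 + (- 1) * r ^ 0"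
    using eq by simp
  have Du: "pole_prod n u z \<noteq> 0" and Dv: "pole_prod n v z \<noteq> 0"
    using reg by (simp_all add: pole_prod_nonzero)
  from rat_prod_combination_coeffs[OF assms(1) comb]
  have "1 / pole_prod n u z = 1 / pole_prod n v z"
    and "power_sum n u z / pole_prod n u z = power_sum n v z / pole_prod n v z"
    by (auto split: if_splits)
  then show ?thesis
    using Du Dv by (simp add: field_simps)
qed

lemma power_sums_if_sum_rat_prod:
  assumes "n \<ge> 1" and reg: "regular n u z" "regular n v z"
    and sum: "\<forall>r. rat_prod n u z r + rat_prod n v z r = r ^ p + r ^ q" and "p \<noteq> n" "q \<noteq> n"
  shows "pole_prod n v z = - pole_prod n u z"
    and "(-1) ^ (n - 1) * (power_sum n u z - power_sum n v z)
           = ((if p = n - 1 then 1 else 0) + (if q = n - 1 then 1 else 0)) * pole_prod n u z"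
proof -
  have comb: "\<forall>r. 1 * rat_prod n u z r + 1 * rat_prod n v z r = 1 * r ^ p + 1 * r ^ q"
    using sum by simp
  have Du: "pole_prod n u z \<noteq> 0" and Dv: "pole_prod n v z \<noteq> 0"
    using reg by (simp_all add: pole_prod_nonzero)
  note coeffs = rat_prod_combination_coeffs[OF assms(1) comb]
  from coeffs(1) have "1 / pole_prod n u z + 1 / pole_prod n v z = 0"
    using assms(5,6) by simp
  then show Dv_eq: "pole_prod n v z = - pole_prod n u z"
    using Du Dv by (simp add: field_simps add_eq_0_iff)
  from coeffs(2) show "(-1) ^ (n - 1) * (power_sum n u z - power_sum n v z)
           = ((if p = n - 1 then 1 else 0) + (if q = n - 1 then 1 else 0)) * pole_prod n u z"
    using Du by (simp add: Dv_eq field_simps)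
qed

lemma power_sum_as_mset: "power_sum n u z = (\<Sum>e\<in>#image_mset u (mset_set {1..n}). z powi e)"
  by (simp add: power_sum_def sum_unfold_sum_mset multiset.map_comp comp_def)

lemma rows_mset_eq_if_power_sums_eq:
  assumes nz: "\<forall>j\<in>{1..n}. u j \<noteq> 0 \<and> v j \<noteq> 0"
    and eq: "\<forall>z. regular n u z \<and> regular n v z \<longrightarrow> power_sum n u z = power_sum n v z"
  shows "image_mset u (mset_set {1..n}) = image_mset v (mset_set {1..n})"
proof (rule mset_eq_if_powi_sums_eq, intro allI impI)
  fix x :: real
  assume "x > 1"
  then have "regular n u (of_real x)" and "regular n v (of_real x)"
    using nz regular_of_real by auto
  then have "power_sum n u (of_real x) = power_sum n v (of_real x)"
    using eq by blast
  then show "(\<Sum>e\<in>#image_mset u (mset_set {1..n}). (of_real x :: complex) powi e)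
      = (\<Sum>e\<in>#image_mset v (mset_set {1..n}). of_real x powi e)"
    by (simp only: power_sum_as_mset)
qed

lemma rows_disjoint_if_sum_rat_prod:
  assumes nz: "\<forall>j\<in>{1..n}. u j \<noteq> 0 \<and> v j \<noteq> 0"
    and sum: "\<forall>z r. regular n u z \<and> regular n v z \<longrightarrow> rat_prod n u z r + rat_prod n v z r = r ^ p + r ^ q"
    and j1: "j1 \<in> {1..n}" and j2: "j2 \<in> {1..n}"
  shows "u j1 \<noteq> v j2"
proof
  assume eq: "u j1 = v j2"
  \<comment> \<open>At z = 2 and r = 2 powi u j1 both products vanish, while r ^ p + r ^ q > 0.\<close>
  define t :: real where "t = 2 powi u j1"
  have reg: "regular n u (of_real 2)" "regular n v (of_real 2)"
    using nz regular_of_real[of 2] by auto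
  have "rat_prod n u (of_real 2) (of_real t) = 0"
    unfolding rat_prod_def t_def using j1 by (auto simp: of_real_power_int intro!: prod_zero bexI[of _ j1])
  moreover have "rat_prod n v (of_real 2) (of_real t) = 0"
    unfolding rat_prod_def t_def using j2 eq by (auto simp: of_real_power_int intro!: prod_zero bexI[of _ j2])
  moreover have "rat_prod n u (of_real 2) (of_real t) + rat_prod n v (of_real 2) (of_real t)
      = of_real t ^ p + of_real t ^ q"
    using sum reg by blast
  ultimately have "of_real t ^ p + of_real t ^ q = (0 :: complex)"
    by simp
  then have "of_real (t ^ p + t ^ q) = (0 :: complex)"
    by simp
  then have "t ^ p + t ^ q = 0"
    by (simp only: of_real_eq_0_iff)
  moreover have "t ^ p + t ^ q > 0"
    by (simp add: t_def add_pos_pos)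
  ultimately show False
    by simp
qed

lemma no_power_sum_identity_2:
  assumes nz: "\<forall>j\<in>{1..2}. u j \<noteq> 0 \<and> v j \<noteq> 0"
    and eq: "\<forall>z. regular 2 u z \<and> regular 2 v z \<longrightarrow>
               - (power_sum 2 u z - power_sum 2 v z) = 2 * pole_prod 2 u z"
  shows False
proof -
  have "{#u 1, u 2, v 1, v 2#} = {#u 1 + u 2, u 1 + u 2, 0, 0#}"
  proof (rule mset_eq_if_powi_sums_eq, intro allI impI)
    fix x :: real
    assume "x > 1"
    define z :: complex where "z = of_real x"
    have "regular 2 u z" and "regular 2 v z"
      using nz regular_of_real \<open>x > 1\<close> by (auto simp: z_def)
    moreover have "{1..2::nat} = {1, 2}"
      by auto
    ultimately have "- (z powi u 1 + z powi u 2 - (z powi v 1 + z powi v 2))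
        = 2 * ((z powi u 1 - 1) * (z powi u 2 - 1))"
      using eq by (auto simp: power_sum_def pole_prod_def regular_def)
    then have "z powi u 1 + z powi u 2 + z powi v 1 + z powi v 2
        = z powi u 1 * z powi u 2 + z powi u 1 * z powi u 2 + 1 + 1"
      by algebra
    moreover have "z \<noteq> 0"
      using \<open>x > 1\<close> by (simp add: z_def)
    ultimately show "(\<Sum>e\<in>#{#u 1, u 2, v 1, v 2#}. z powi e) = (\<Sum>e\<in>#{#u 1 + u 2, u 1 + u 2, 0, 0#}. z powi e)"
      by (simp add: power_int_add algebra_simps)
  qed
  then have "0 \<in># {#u 1, u 2, v 1, v 2#}"
    by simp
  then show False
    using nz by auto
qed

lemma weights_of_power_sum_identity_3:
  assumes nz: "\<forall>j\<in>{1..3}. u j \<noteq> 0 \<and> v j \<noteq> 0"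
    and eq: "\<forall>z. regular 3 u z \<and> regular 3 v z \<longrightarrow> power_sum 3 u z - power_sum 3 v z = pole_prod 3 u z"
  shows "u 1 + u 2 + u 3 = 0"
    and "image_mset (\<lambda>j. - u j) (mset_set {1..3}) = image_mset v (mset_set {1..3})"
proof -
  have ms: "{#0, u 1 + u 2, u 1 + u 3, u 2 + u 3#} = {#u 1 + u 2 + u 3, v 1, v 2, v 3#}"
  proof (rule mset_eq_if_powi_sums_eq, intro allI impI)
    fix x :: real
    assume "x > 1"
    define z :: complex where "z = of_real x"
    have "regular 3 u z" and "regular 3 v z"
      using nz regular_of_real \<open>x > 1\<close> by (auto simp: z_def)
    moreover have "{1..3::nat} = {1, 2, 3}"
      by auto
    ultimately have "z powi u 1 + z powi u 2 + z powi u 3 - (z powi v 1 + z powi v 2 + z powi v 3)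
        = (z powi u 1 - 1) * (z powi u 2 - 1) * (z powi u 3 - 1)"
      using eq by (auto simp: power_sum_def pole_prod_def regular_def algebra_simps)
    then have "1 + z powi u 1 * z powi u 2 + z powi u 1 * z powi u 3 + z powi u 2 * z powi u 3
        = z powi u 1 * z powi u 2 * z powi u 3 + z powi v 1 + z powi v 2 + z powi v 3"
      by algebra
    moreover have "z \<noteq> 0"
      using \<open>x > 1\<close> by (simp add: z_def)
    ultimately show "(\<Sum>e\<in>#{#0, u 1 + u 2, u 1 + u 3, u 2 + u 3#}. z powi e)
        = (\<Sum>e\<in>#{#u 1 + u 2 + u 3, v 1, v 2, v 3#}. z powi e)"
      by (simp add: power_int_add algebra_simps)
  qed
  then have "0 \<in># {#u 1 + u 2 + u 3, v 1, v 2, v 3#}"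
    by (metis union_single_eq_member)
  then show sum0: "u 1 + u 2 + u 3 = 0"
    using nz by auto
  have "{#u 1 + u 2, u 1 + u 3, u 2 + u 3#} = {#v 1, v 2, v 3#}"
    using ms sum0 by simp
  moreover have "u 1 + u 2 = - u 3" "u 1 + u 3 = - u 2" "u 2 + u 3 = - u 1"
    using sum0 by linarith+
  ultimately have "{#- u 3, - u 2, - u 1#} = {#v 1, v 2, v 3#}"
    by (simp only:)
  moreover have "mset_set {1..3::nat} = {#1, 2, 3#}"
    by (simp add: numeral_3_eq_3 atLeastAtMostSuc_conv)
  ultimately show "image_mset (\<lambda>j. - u j) (mset_set {1..3}) = image_mset v (mset_set {1..3})"
    by (simp add: add_mset_commute)
qed

lemma sum_rat_prod_top_exponent:
  assumes "n \<ge> 1" and nz: "\<forall>j\<in>{1..n}. u j \<noteq> 0 \<and> v j \<noteq> 0"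
    and sum: "\<forall>z r. regular n u z \<and> regular n v z \<longrightarrow> rat_prod n u z r + rat_prod n v z r = r ^ p + r ^ q"
  shows "p = n \<or> q = n \<or> p = n - 1 \<or> q = n - 1"
proof (rule ccontr)
  assume top: "\<not> ?thesis"
  have "power_sum n u z = power_sum n v z" if reg: "regular n u z" "regular n v z" for z
  proof -
    have "\<forall>r. rat_prod n u z r + rat_prod n v z r = r ^ p + r ^ q"
      using sum reg by blast
    from power_sums_if_sum_rat_prod(2)[OF assms(1) reg this] show ?thesis
      using top by simp
  qed
  then have ms: "image_mset u (mset_set {1..n}) = image_mset v (mset_set {1..n})"
    using rows_mset_eq_if_power_sums_eq[OF nz] by blast
  have "u 1 \<in># image_mset u (mset_set {1..n})"
    using assms(1) by simp
  then obtain j where "j \<in> {1..n}" and "v j = u 1"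
    unfolding ms by auto
  then show False
    using rows_disjoint_if_sum_rat_prod[OF nz sum, of 1 j] assms(1) by simp
qed

lemma sum_rat_prod_exponents_distinct:
  assumes "n \<ge> 1" and nz: "\<forall>j\<in>{1..n}. u j \<noteq> 0 \<and> v j \<noteq> 0"
    and sum: "\<forall>z r. regular n u z \<and> regular n v z \<longrightarrow> rat_prod n u z r + rat_prod n v z r = r ^ p + r ^ q"
    and "p + q = n"
  shows "p \<noteq> q"
proof
  assume "p = q"
  then have n: "n = 2" and p: "p = 1" "q = 1"
    using sum_rat_prod_top_exponent[OF assms(1-3)] assms(1,4) by auto
  have "- (power_sum 2 u z - power_sum 2 v z) = 2 * pole_prod 2 u z" if reg: "regular 2 u z" "regular 2 v z" for z
  proof -
    have "\<forall>r. rat_prod n u z r + rat_prod n v z r = r ^ p + r ^ q"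
      using sum reg n by blast
    from power_sums_if_sum_rat_prod(2)[OF assms(1) reg[folded n] this] show ?thesis
      using n p by simp
  qed
  then show False
    using no_power_sum_identity_2 nz n by blast
qed

lemma cis_pi_div_powi_eq_1_iff:
  fixes m e :: int
  assumes "m \<noteq> 0"
  shows "cis (pi / of_int m) powi e = 1 \<longleftrightarrow> (\<exists>N. e = 2 * N * m)"
proof -
  have "of_int e * (pi / of_int m) = of_int N * (2 * pi) \<longleftrightarrow> e = 2 * N * m" for N :: int
  proof -
    have "of_int e * (pi / of_int m) = of_int N * (2 * pi) \<longleftrightarrow> (of_int e :: real) = of_int (2 * N * m)"
      using assms by (auto simp: field_simps)
    then show ?thesis
      by (simp only: of_int_eq_iff)
  qed
  then show ?thesis
    by (simp add: cis_power_int cis_eq_1_iff)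
qed

lemma cis_pi_div_power_sum_eq_0:
  fixes p q :: nat
  assumes "k = int p - int q" and "k \<noteq> 0"
  shows "cis (pi / of_int k) ^ p + cis (pi / of_int k) ^ q = 0"
proof -
  have "real p = real q + of_int k"
    using assms(1) by simp
  then have "real p * (pi / of_int k) = real q * (pi / of_int k) + pi"
    using assms(2) by (simp add: distrib_right add_divide_distrib)
  then have "cis (pi / of_int k) ^ p = cis (real q * (pi / of_int k)) * cis pi"
    by (simp only: DeMoivre cis_mult)
  then show ?thesis
    by (simp add: DeMoivre)
qed

lemma int_diff_multiple_bound:
  fixes a b k N :: int
  assumes eq: "b - a = 2 * N * (a * k)" and "b \<noteq> a" and "\<bar>b\<bar> \<le> \<bar>a\<bar>"
  shows "b = - a \<and> \<bar>k\<bar> = 1"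
proof -
  have "a \<noteq> 0" and "N * k \<noteq> 0"
    using assms(1,2) by auto
  then have pos: "\<bar>a\<bar> > 0" and Nk: "\<bar>N * k\<bar> \<ge> 1"
    by (simp_all only: zero_less_abs_iff int_one_le_iff_zero_less) simp_all
  have "2 * \<bar>a\<bar> * \<bar>N * k\<bar> = \<bar>b - a\<bar>"
    using eq by (simp add: abs_mult mult_ac)
  also have "\<dots> \<le> 2 * \<bar>a\<bar>"
    using assms(3) by linarith
  finally have "\<bar>N * k\<bar> \<le> 1"
    using pos by simp
  with Nk have Nk1: "\<bar>N * k\<bar> = 1"
    by simp
  then have "\<bar>k\<bar> = 1"
    by (metis abs_zmult_eq_1 mult.commute)
  moreover have "\<bar>b - a\<bar> = 2 * \<bar>a\<bar>"
    using eq Nk1 by (simp add: abs_mult mult_ac)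
  ultimately show ?thesis
    using assms(3) by arith
qed

lemma opposite_of_max_weight:
  assumes sum: "\<forall>z r. regular n u z \<and> regular n v z \<longrightarrow> rat_prod n u z r + rat_prod n v z r = r ^ p + r ^ q"
    and "p \<noteq> q" and j0: "j0 \<in> {1..n}"
    and max: "\<forall>j\<in>{1..n}. \<bar>u j\<bar> \<le> \<bar>u j0\<bar> \<and> \<bar>v j\<bar> \<le> \<bar>u j0\<bar>"
    and nz: "\<forall>j\<in>{1..n}. u j \<noteq> 0 \<and> v j \<noteq> 0"
    and disj: "\<forall>j\<in>{1..n}. v j \<noteq> u j0"
  shows "\<bar>int p - int q\<bar> = 1 \<and> (\<exists>j\<in>{1..n}. v j = - u j0)"
proof -
  define k where "k = int p - int q"
  define a where "a = u j0"
  define \<zeta> where "\<zeta> = cis (pi / of_int (a * k))"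
  \<comment> \<open>A root of unity of order 2 |a k|: every weight is too small to be a nonzero multiple of
    that order, so \<zeta> is regular, and r = \<zeta> powi a satisfies r powi k = -1. The numerator of
    rat_prod n u vanishes at (\<zeta>, r), hence so does that of rat_prod n v.\<close>
  have "k \<noteq> 0" and "a \<noteq> 0"
    using \<open>p \<noteq> q\<close> nz j0 by (auto simp: k_def a_def)
  then have m: "a * k \<noteq> 0" and "\<bar>a\<bar> \<le> \<bar>a * k\<bar>"
    by (auto simp: abs_mult)
  have unity: "\<zeta> powi e = 1 \<longleftrightarrow> (\<exists>N. e = 2 * N * (a * k))" for e
    unfolding \<zeta>_def using m by (rule cis_pi_div_powi_eq_1_iff)
  have "\<zeta> powi e \<noteq> 1" if "e \<noteq> 0" and "\<bar>e\<bar> \<le> \<bar>a\<bar>" for e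
  proof
    assume "\<zeta> powi e = 1"
    then obtain N where "e = 2 * N * (a * k)"
      using unity by blast
    then have "\<bar>e\<bar> = 2 * \<bar>N\<bar> * \<bar>a * k\<bar>" and "N \<noteq> 0"
      using \<open>e \<noteq> 0\<close> by (auto simp: abs_mult)
    then have "\<bar>e\<bar> \<ge> 2 * \<bar>a * k\<bar>"
      by (simp add: mult_le_cancel_right1 int_one_le_iff_zero_less)
    with that \<open>\<bar>a\<bar> \<le> \<bar>a * k\<bar>\<close> m show False
      by linarith
  qed
  then have reg: "regular n u \<zeta>" "regular n v \<zeta>"
    using nz max by (auto simp: regular_def \<zeta>_def a_def)
  define r where "r = \<zeta> powi a"
  have "r = cis (pi / of_int k)"
    using \<open>a \<noteq> 0\<close> by (simp add: r_def \<zeta>_def cis_power_int)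
  then have "r ^ p + r ^ q = 0"
    using cis_pi_div_power_sum_eq_0 k_def \<open>k \<noteq> 0\<close> by simp
  moreover have "rat_prod n u \<zeta> r = 0"
    unfolding rat_prod_def using j0 by (auto simp: r_def a_def intro!: prod_zero bexI[of _ j0])
  moreover have "rat_prod n u \<zeta> r + rat_prod n v \<zeta> r = r ^ p + r ^ q"
    using sum reg by blast
  ultimately have "rat_prod n v \<zeta> r = 0"
    by simp
  then obtain j where j: "j \<in> {1..n}" and "\<zeta> powi v j = r"
    using reg(2) by (auto simp: rat_prod_def regular_def)
  then have "\<zeta> powi (v j - a) = 1"
    using reg(2) by (simp add: r_def power_int_diff regular_def)
  then obtain N where "v j - a = 2 * N * (a * k)"
    using unity by blast
  then have "v j = - a \<and> \<bar>k\<bar> = 1"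
    using int_diff_multiple_bound disj j max by (auto simp: a_def)
  then show ?thesis
    using j by (auto simp: k_def a_def)
qed

lemma obtain_max_abs_weight:
  fixes u v :: "nat \<Rightarrow> int"
  assumes "n \<ge> 1"
  obtains (row1) j0 where "j0 \<in> {1..n}" "\<forall>j\<in>{1..n}. \<bar>u j\<bar> \<le> \<bar>u j0\<bar> \<and> \<bar>v j\<bar> \<le> \<bar>u j0\<bar>"
    | (row2) j0 where "j0 \<in> {1..n}" "\<forall>j\<in>{1..n}. \<bar>u j\<bar> \<le> \<bar>v j0\<bar> \<and> \<bar>v j\<bar> \<le> \<bar>v j0\<bar>"
proof -
  define A where "A = (\<lambda>j. \<bar>u j\<bar>) ` {1..n} \<union> (\<lambda>j. \<bar>v j\<bar>) ` {1..n}"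
  have "finite A" and "A \<noteq> {}"
    using assms by (auto simp: A_def)
  then have "Max A \<in> A"
    by (rule Max_in)
  have bound: "\<forall>j\<in>{1..n}. \<bar>u j\<bar> \<le> Max A \<and> \<bar>v j\<bar> \<le> Max A"
    using Max_ge[OF \<open>finite A\<close>] by (auto simp: A_def)
  from \<open>Max A \<in> A\<close> obtain j0 where "j0 \<in> {1..n}" and "Max A = \<bar>u j0\<bar> \<or> Max A = \<bar>v j0\<bar>"
    unfolding A_def by blast
  then show thesis
    using row1 row2 bound by metis
qed

lemma sum_rat_prod_exponent_gap:
  assumes n1: "n \<ge> 1" and nz: "\<forall>j\<in>{1..n}. u j \<noteq> 0 \<and> v j \<noteq> 0"
    and sum: "\<forall>z r. regular n u z \<and> regular n v z \<longrightarrow> rat_prod n u z r + rat_prod n v z r = r ^ p + r ^ q"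
    and "p \<noteq> q"
  shows "\<bar>int p - int q\<bar> = 1 \<and> (n = 1 \<longrightarrow> v 1 = - u 1)"
  using n1
proof (cases rule: obtain_max_abs_weight[where u = u and v = v])
  case (row1 j0)
  have "\<forall>j\<in>{1..n}. v j \<noteq> u j0"
    using rows_disjoint_if_sum_rat_prod[OF nz sum] row1(1) by metis
  from opposite_of_max_weight[OF sum \<open>p \<noteq> q\<close> row1 nz this] show ?thesis
    using row1(1) by auto
next
  case (row2 j0)
  have sum': "\<forall>z r. regular n v z \<and> regular n u z \<longrightarrow> rat_prod n v z r + rat_prod n u z r = r ^ q + r ^ p"
    using sum by (auto simp: add.commute)
  have "\<forall>j\<in>{1..n}. u j \<noteq> v j0"
    using rows_disjoint_if_sum_rat_prod[OF nz sum] row2(1) by metis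
  moreover have "\<forall>j\<in>{1..n}. \<bar>v j\<bar> \<le> \<bar>v j0\<bar> \<and> \<bar>u j\<bar> \<le> \<bar>v j0\<bar>"
    using row2(2) by auto
  ultimately have "\<bar>int q - int p\<bar> = 1 \<and> (\<exists>j\<in>{1..n}. u j = - v j0)"
    using opposite_of_max_weight[OF sum' \<open>p \<noteq> q\<close>[symmetric] row2(1)] nz by auto
  then show ?thesis
    using row2(1) by auto
qed

lemma sum_rat_prod_classification:
  assumes n1: "n \<ge> 1" and nz: "\<forall>j\<in>{1..n}. u j \<noteq> 0 \<and> v j \<noteq> 0"
    and sum: "\<forall>z r. regular n u z \<and> regular n v z \<longrightarrow> rat_prod n u z r + rat_prod n v z r = r ^ p + r ^ q"
    and pq: "p + q = n"
  shows "n = 1 \<and> v 1 = - u 1 \<or>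
         n = 3 \<and> u 1 + u 2 + u 3 = 0 \<and> image_mset (\<lambda>j. - u j) (mset_set {1..3}) = image_mset v (mset_set {1..3})"
proof -
  have gap: "\<bar>int p - int q\<bar> = 1" and "n = 1 \<longrightarrow> v 1 = - u 1"
    using sum_rat_prod_exponent_gap[OF n1 nz sum sum_rat_prod_exponents_distinct[OF n1 nz sum pq]] by auto
  have "n = 1 \<or> n = 3"
    using sum_rat_prod_top_exponent[OF n1 nz sum] pq gap by arith
  then show ?thesis
  proof
    assume "n = 1"
    then show ?thesis
      using \<open>n = 1 \<longrightarrow> v 1 = - u 1\<close> by simp
  next
    assume n: "n = 3"
    have "power_sum 3 u z - power_sum 3 v z = pole_prod 3 u z" if reg: "regular 3 u z" "regular 3 v z" for z
    proof -
      have "\<forall>r. rat_prod n u z r + rat_prod n v z r = r ^ p + r ^ q"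
        using sum reg n by blast
      from power_sums_if_sum_rat_prod(2)[OF n1 reg[folded n] this] show ?thesis
        using n pq gap by auto
    qed
    then show ?thesis
      using weights_of_power_sum_identity_3[of u v] nz n by auto
  qed
qed

lemma rearrI:
  assumes "\<tau> permutes {1, 2}" and "\<forall>i\<in>{1, 2}. \<sigma> i permutes {1..n}"
  shows "rearr n w eps (\<lambda>i j. w (\<tau> i) (\<sigma> (\<tau> i) j)) (\<lambda>i. eps (\<tau> i))"
  using assms unfolding rearr_def by blast

lemma swap_rows_permutes: "Transposition.transpose 1 2 permutes {1, 2 :: nat}"
  by (rule permutes_swap_id) auto

lemma permutes_two_cases:
  assumes "\<tau> permutes {1, 2 :: nat}"
  shows "\<tau> 1 = 1 \<and> \<tau> 2 = 2 \<or> \<tau> 1 = 2 \<and> \<tau> 2 = 1"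
proof -
  have "\<tau> 1 \<in> {1, 2}" and "\<tau> 2 \<in> {1, 2}" and "\<tau> 1 \<noteq> \<tau> 2"
    using permutes_in_image[OF assms] permutes_inj[OF assms] by (auto dest: injD)
  then show ?thesis
    by auto
qed

lemma rearr_signs:
  assumes "rearr n w eps w' eps'"
  shows "eps' 1 = eps 1 \<and> eps' 2 = eps 2 \<or> eps' 1 = eps 2 \<and> eps' 2 = eps 1"
  using assms permutes_two_cases unfolding rearr_def by fastforce

lemma case_Z_intro:
  assumes "p permutes {1..n}" and "\<forall>j\<in>{1..n}. w 1 j = w 2 (p j)" and "eps 1 = - eps 2"
  shows "case_Z n w eps"
proof -
  define w' where "w' = (\<lambda>i j. w (id i) ((\<lambda>i. if i = 1 then id else p) (id i) j))"
  define eps' where "eps' = (\<lambda>i :: nat. eps (id i))"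
  have "rearr n w eps w' eps'"
    unfolding w'_def eps'_def using assms(1) by (intro rearrI[of id]) (auto simp: permutes_id)
  moreover have "\<forall>j\<in>{1..n}. w' 1 j = w' 2 j" and "eps' 1 = - eps' 2"
    using assms(2,3) by (simp_all add: w'_def eps'_def)
  ultimately show ?thesis
    unfolding case_Z_def by blast
qed

lemma case_L1_intro:
  assumes "w 2 1 = - w 1 1" and "w 1 1 \<noteq> 0" and "eps 2 = eps 1"
  shows "case_L1 1 w eps"
proof -
  define \<tau> :: "nat \<Rightarrow> nat" where "\<tau> = (if w 1 1 > 0 then id else Transposition.transpose 1 2)"
  define w' where "w' = (\<lambda>i j. w (\<tau> i) ((\<lambda>_. id) (\<tau> i) j))"
  define eps' where "eps' = (\<lambda>i. eps (\<tau> i))"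
  have "\<tau> permutes {1, 2}"
    using swap_rows_permutes by (simp add: \<tau>_def permutes_id)
  then have "rearr 1 w eps w' eps'"
    unfolding w'_def eps'_def by (intro rearrI) (auto simp: permutes_id)
  moreover have "w' 1 1 > 0 \<and> w' 2 1 = - w' 1 1" and "eps' 1 = eps' 2"
    using assms by (auto simp: w'_def eps'_def \<tau>_def)
  ultimately show ?thesis
    unfolding case_L1_def by auto
qed

lemma exists_perm_same_sign_pair:
  fixes f :: "nat \<Rightarrow> int"
  assumes "f 1 + f 2 + f 3 = 0" and "f 1 \<noteq> 0" "f 2 \<noteq> 0" "f 3 \<noteq> 0"
  obtains \<sigma> where "\<sigma> permutes {1..3}" and "0 < f (\<sigma> 1) \<and> 0 < f (\<sigma> 2) \<or> f (\<sigma> 1) < 0 \<and> f (\<sigma> 2) < 0"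
    and "f (\<sigma> 3) = - (f (\<sigma> 1) + f (\<sigma> 2))"
proof -
  have swap: "Transposition.transpose a 3 permutes {1..3::nat}" if "a \<in> {1, 2}" for a
    using that by (intro permutes_swap_id) auto
  consider "(f 1 > 0) = (f 2 > 0)" | "(f 1 > 0) = (f 3 > 0)" | "(f 2 > 0) = (f 3 > 0)"
    by auto
  then show thesis
  proof cases
    case 1
    then show thesis
      using that[of id] assms by (auto simp: permutes_id)
  next
    case 2
    then show thesis
      using that[of "Transposition.transpose 2 3"] swap[of 2] assms by (auto simp: Transposition.transpose_def)
  next
    case 3
    then show thesis
      using that[of "Transposition.transpose 1 3"] swap[of 1] assms by (auto simp: Transposition.transpose_def)
  qed
qed

lemma case_S3_intro:
  assumes p: "p permutes {1..3}" and neg: "\<forall>j\<in>{1..3}. - w 1 j = w 2 (p j)"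
    and nz: "\<forall>j\<in>{1..3}. w 1 j \<noteq> 0" and sum0: "w 1 1 + w 1 2 + w 1 3 = 0" and "eps 2 = eps 1"
  shows "case_S3 3 w eps"
proof -
  \<comment> \<open>Reorder row 1 so that its first two entries share a sign; swap the rows if it is negative.\<close>
  obtain \<sigma> where \<sigma>: "\<sigma> permutes {1..3}"
    and sign: "0 < w 1 (\<sigma> 1) \<and> 0 < w 1 (\<sigma> 2) \<or> w 1 (\<sigma> 1) < 0 \<and> w 1 (\<sigma> 2) < 0"
    and third: "w 1 (\<sigma> 3) = - (w 1 (\<sigma> 1) + w 1 (\<sigma> 2))"
    using exists_perm_same_sign_pair[of "w 1"] sum0 nz by auto
  define \<sigma>' where "\<sigma>' i = (if i = 1 then \<sigma> else p \<circ> \<sigma>)" for i :: nat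
  have perms: "\<forall>i\<in>{1, 2}. \<sigma>' i permutes {1..3}"
    using \<sigma> permutes_compose[OF \<sigma> p] by (auto simp: \<sigma>'_def)
  have row2: "w 2 (p (\<sigma> j)) = - w 1 (\<sigma> j)" if "j \<in> {1..3}" for j
    using neg permutes_in_image[OF \<sigma>] that by auto
  have row2': "w 2 (p (\<sigma> 1)) = - w 1 (\<sigma> 1)" "w 2 (p (\<sigma> 2)) = - w 1 (\<sigma> 2)" "w 2 (p (\<sigma> 3)) = - w 1 (\<sigma> 3)"
    using row2 by auto
  define \<tau> :: "nat \<Rightarrow> nat" where "\<tau> = (if w 1 (\<sigma> 1) > 0 then id else Transposition.transpose 1 2)"
  define w' where "w' = (\<lambda>i j. w (\<tau> i) (\<sigma>' (\<tau> i) j))"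
  define eps' where "eps' = (\<lambda>i. eps (\<tau> i))"
  have "\<tau> permutes {1, 2}"
    using swap_rows_permutes by (simp add: \<tau>_def permutes_id)
  then have "rearr 3 w eps w' eps'"
    unfolding w'_def eps'_def using perms by (rule rearrI)
  moreover have "w' 1 1 = \<bar>w 1 (\<sigma> 1)\<bar> \<and> w' 1 2 = \<bar>w 1 (\<sigma> 2)\<bar> \<and> w' 1 3 = - (\<bar>w 1 (\<sigma> 1)\<bar> + \<bar>w 1 (\<sigma> 2)\<bar>) \<and>
      w' 2 1 = - \<bar>w 1 (\<sigma> 1)\<bar> \<and> w' 2 2 = - \<bar>w 1 (\<sigma> 2)\<bar> \<and> w' 2 3 = \<bar>w 1 (\<sigma> 1)\<bar> + \<bar>w 1 (\<sigma> 2)\<bar>"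
    using sign third row2' by (auto simp: w'_def \<tau>_def \<sigma>'_def)
  moreover have "eps' 1 = eps' 2"
    using \<open>eps 2 = eps 1\<close> by (simp add: eps'_def \<tau>_def)
  moreover have "\<bar>w 1 (\<sigma> 1)\<bar> > 0" and "\<bar>w 1 (\<sigma> 2)\<bar> > 0"
    using sign by auto
  ultimately show ?thesis
    unfolding case_S3_def by blast
qed

lemma case_Z_of_opposite_signs:
  assumes n1: "n \<ge> 1" and nz: "\<forall>i\<in>{1,2}. \<forall>j\<in>{1..n}. w i j \<noteq> 0"
    and const: "\<forall>x y. T_const n w eps x y" and opp: "eps 2 = - eps 1" and "eps 1 \<noteq> 0"
  shows "case_Z n w eps"
proof -
  define e :: complex where "e = of_int (eps 1)"
  have "e \<noteq> 0" and e2: "of_int (eps 2) = - e"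
    using \<open>eps 1 \<noteq> 0\<close> opp by (simp_all add: e_def)
  note ident = T_const_rat_prod_identity[OF nz const[rule_format], unfolded e2, folded e_def]
  let ?q1 = "neg_count n (w 1)" and ?q2 = "neg_count n (w 2)"
  have "\<forall>r::complex. r ^ ?q1 - r ^ ?q2 = r ^ (n - ?q1) - r ^ (n - ?q2)"
    using ident(2) \<open>e \<noteq> 0\<close> by (simp flip: right_diff_distrib)
  then have q: "?q1 = ?q2"
    using power_diff_reflection_imp_eq neg_count_le by blast
  have "power_sum n (w 1) z = power_sum n (w 2) z" if reg: "regular n (w 1) z" "regular n (w 2) z" for z
  proof (rule power_sum_eq_if_rat_prod_eq[OF n1 reg], rule allI)
    fix r
    show "rat_prod n (w 1) z r = rat_prod n (w 2) z r"
      using ident(1) reg q \<open>e \<noteq> 0\<close> by (simp flip: right_diff_distrib)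
  qed
  then have "image_mset (w 1) (mset_set {1..n}) = image_mset (w 2) (mset_set {1..n})"
    using rows_mset_eq_if_power_sums_eq nz by auto
  then obtain p where "p permutes {1..n}" and "\<forall>j\<in>{1..n}. w 1 j = w 2 (p j)"
    by (rule image_mset_eq_implies_permutes[OF finite_atLeastAtMost])
  then show ?thesis
    using case_Z_intro opp by auto
qed

lemma case_L1_or_S3_of_equal_signs:
  assumes n1: "n \<ge> 1" and nz: "\<forall>i\<in>{1,2}. \<forall>j\<in>{1..n}. w i j \<noteq> 0"
    and const: "\<forall>x y. T_const n w eps x y" and same: "eps 2 = eps 1" and "eps 1 \<noteq> 0"
  shows "case_L1 n w eps \<or> case_S3 n w eps"
proof -
  define e :: complex where "e = of_int (eps 1)"
  have "e \<noteq> 0" and e2: "of_int (eps 2) = e"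
    using \<open>eps 1 \<noteq> 0\<close> same by (simp_all add: e_def)
  note ident = T_const_rat_prod_identity[OF nz const[rule_format], unfolded e2, folded e_def]
  let ?q1 = "neg_count n (w 1)" and ?q2 = "neg_count n (w 2)"
  have "\<forall>r::complex. r ^ ?q1 + r ^ ?q2 = r ^ (n - ?q1) + r ^ (n - ?q2)"
    using ident(2) \<open>e \<noteq> 0\<close> by (simp flip: distrib_left)
  then have "?q1 + ?q2 = n"
    using power_sum_reflection_imp_complementary neg_count_le by blast
  moreover have "\<forall>z r. regular n (w 1) z \<and> regular n (w 2) z \<longrightarrow>
      rat_prod n (w 1) z r + rat_prod n (w 2) z r = r ^ ?q1 + r ^ ?q2"
    using ident(1) \<open>e \<noteq> 0\<close> by (simp flip: distrib_left)
  moreover have nz': "\<forall>j\<in>{1..n}. w 1 j \<noteq> 0 \<and> w 2 j \<noteq> 0"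
    using nz by simp
  ultimately consider "n = 1" "w 2 1 = - w 1 1"
    | "n = 3" "w 1 1 + w 1 2 + w 1 3 = 0"
        "image_mset (\<lambda>j. - w 1 j) (mset_set {1..3}) = image_mset (w 2) (mset_set {1..3})"
    using sum_rat_prod_classification[OF n1 nz'] by blast
  then show ?thesis
  proof cases
    case 1
    then show ?thesis
      using case_L1_intro nz same by auto
  next
    case 2
    obtain p where "p permutes {1..3}" and "\<forall>j\<in>{1..3}. - w 1 j = w 2 (p j)"
      using 2(3) by (rule image_mset_eq_implies_permutes[OF finite_atLeastAtMost])
    then show ?thesis
      using case_S3_intro 2 nz same by auto
  qed
qed

lemma case_Z_signs:
  assumes "case_Z n w eps"
  shows "eps 1 = - eps 2"
proof -
  obtain w' eps' where "rearr n w eps w' eps'" and "eps' 1 = - eps' 2"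
    using assms unfolding case_Z_def by blast
  then show ?thesis
    using rearr_signs[of n w eps w' eps'] by auto
qed

lemma case_L1_signs:
  assumes "case_L1 n w eps"
  shows "eps 1 = eps 2"
proof -
  obtain w' eps' where "rearr n w eps w' eps'" and "eps' 1 = eps' 2"
    using assms unfolding case_L1_def by blast
  then show ?thesis
    using rearr_signs[of n w eps w' eps'] by auto
qed

lemma case_S3_signs:
  assumes "case_S3 n w eps"
  shows "eps 1 = eps 2"
proof -
  obtain w' eps' where "rearr n w eps w' eps'" and "eps' 1 = eps' 2"
    using assms unfolding case_S3_def by blast
  then show ?thesis
    using rearr_signs[of n w eps w' eps'] by auto
qed

theorem mainTheorem5:
  fixes n :: nat and w :: "nat \<Rightarrow> nat \<Rightarrow> int" and eps :: "nat \<Rightarrow> int"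
  assumes "n \<ge> 1"
    and "\<forall>i\<in>{1,2}. \<forall>j\<in>{1..n}. w i j \<noteq> 0"
    and "\<forall>i\<in>{1,2}. eps i \<in> {1, -1}"
    and "\<forall>x y. T_const n w eps x y"
  shows "(case_Z n w eps \<or> case_L1 n w eps \<or> case_S3 n w eps) \<and>
         \<not> (case_Z n w eps \<and> case_L1 n w eps) \<and>
         \<not> (case_Z n w eps \<and> case_S3 n w eps) \<and>
         \<not> (case_L1 n w eps \<and> case_S3 n w eps)"
proof -
  have signs: "eps 1 \<noteq> 0" "eps 2 = - eps 1 \<or> eps 2 = eps 1" "eps 1 = eps 2 \<longrightarrow> eps 1 \<noteq> - eps 2"
    using assms(3) by auto
  then have "case_Z n w eps \<or> case_L1 n w eps \<or> case_S3 n w eps"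
    using case_Z_of_opposite_signs[OF assms(1,2,4)] case_L1_or_S3_of_equal_signs[OF assms(1,2,4)] by blast
  moreover have "\<not> (case_L1 n w eps \<and> case_S3 n w eps)"
    unfolding case_L1_def case_S3_def by simp
  ultimately show ?thesis
    using case_Z_signs case_L1_signs case_S3_signs signs(3) by blast
qed

end
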